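(* Let $x$ be a non-negative random variable for which there exist constants $\alpha>0$ and $k>0$ such that $\log(\alpha)/k\ge1$ and $\Pr[x\le\epsilon]\le\alpha\epsilon^k$ for all $\epsilon>0$. Then \[ \mathbb E[\max(1,\log(1/x))]\le\frac{1+\log\alpha}{k}. \]
   Context: $\log$ denotes the natural logarithm. *)

theory Defs
  imports "HOL-Probability.Probability"
begin

end

theory Submission
  imports Defs "HOL-Real_Asymp.Real_Asymp"
begin

text \<open>
  Write \<open>L = ln (1 / X)\<close>. By the layer-cake formula,
  \<open>E[max 1 L] = 1 + \<integral>\<^sub>1\<^sup>\<infinity> Pr[L > t] dt\<close>, and \<open>L > t\<close> forces
  \<open>X \<le> exp (-t)\<close>, so \<open>Pr[L > t] \<le> min 1 (\<alpha> exp (-k t))\<close>. The two bounds cross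
  at \<open>t\<^sub>0 = ln \<alpha> / k \<ge> 1\<close>; integrating \<open>1\<close> on \<open>(1, t\<^sub>0)\<close> and
  \<open>\<alpha> exp (-k t)\<close> on \<open>[t\<^sub>0, \<infinity>)\<close> gives \<open>t\<^sub>0 - 1 + 1 / k\<close>.
\<close>

lemma ennreal_max_eq_add_emeasure_interval:
  fixes c y :: real
  assumes "0 \<le> c"
  shows "ennreal (max c y) = c + emeasure lborel {c<..<y}"
proof (cases "y \<le> c")
  case False
  then show ?thesis using assms ennreal_plus[of c "y - c"] by simp
qed (simp add: max_def)

lemma nn_integral_max_eq_tail_integral:
  fixes Y :: "'a \<Rightarrow> real"
  assumes "sigma_finite_measure M" and [measurable]: "Y \<in> borel_measurable M" and "0 \<le> c"
  shows "(\<integral>\<^sup>+\<omega>. ennreal (max c (Y \<omega>)) \<partial>M)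
    = c * emeasure M (space M) + (\<integral>\<^sup>+t\<in>{c<..}. emeasure M {\<omega>\<in>space M. t < Y \<omega>} \<partial>lborel)"
proof -
  interpret pair_sigma_finite M lborel
    by (simp add: pair_sigma_finite_def assms(1) lborel.sigma_finite_measure_axioms)
  define G where "G \<omega> t = (indicator {c<..<Y \<omega>} t :: ennreal)" for \<omega> t
  have G_measurable: "case_prod G \<in> borel_measurable (M \<Otimes>\<^sub>M lborel)"
    unfolding G_def indicator_def greaterThanLessThan_iff by measurable
  have G_fibre: "(\<integral>\<^sup>+\<omega>. G \<omega> t \<partial>M) = emeasure M {\<omega>\<in>space M. t < Y \<omega>} * indicator {c<..} t" for t
  proof -
    have "(\<integral>\<^sup>+\<omega>. G \<omega> t \<partial>M) = (\<integral>\<^sup>+\<omega>. indicator {\<omega>\<in>space M. t < Y \<omega>} \<omega> * indicator {c<..} t \<partial>M)"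
      by (intro nn_integral_cong) (auto simp: G_def indicator_def)
    then show ?thesis by (simp add: nn_integral_multc)
  qed
  have "(\<integral>\<^sup>+\<omega>. ennreal (max c (Y \<omega>)) \<partial>M) = (\<integral>\<^sup>+\<omega>. c + (\<integral>\<^sup>+t. G \<omega> t \<partial>lborel) \<partial>M)"
    using assms(3) by (simp add: G_def ennreal_max_eq_add_emeasure_interval)
  also have "\<dots> = c * emeasure M (space M) + (\<integral>\<^sup>+\<omega>. (\<integral>\<^sup>+t. G \<omega> t \<partial>lborel) \<partial>M)"
    using lborel.borel_measurable_nn_integral_fst[OF G_measurable]
    by (subst nn_integral_add) auto
  also have "(\<integral>\<^sup>+\<omega>. (\<integral>\<^sup>+t. G \<omega> t \<partial>lborel) \<partial>M) = (\<integral>\<^sup>+t. (\<integral>\<^sup>+\<omega>. G \<omega> t \<partial>M) \<partial>lborel)"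
    using Fubini'[OF G_measurable] by simp
  finally show ?thesis by (simp add: G_fibre)
qed

lemma (in prob_space) emeasure_ln_inverse_gt_le:
  fixes X :: "'a \<Rightarrow> real"
  assumes [measurable]: "X \<in> borel_measurable M" and "\<forall>\<omega>\<in>space M. X \<omega> \<ge> 0"
    and small_ball: "\<forall>\<epsilon>>0. prob {\<omega>\<in>space M. X \<omega> \<le> \<epsilon>} \<le> \<alpha> * \<epsilon> powr k"
    and "0 \<le> t"
  shows "emeasure M {\<omega>\<in>space M. t < ln (1 / X \<omega>)} \<le> ennreal (\<alpha> * exp (- k * t))"
proof -
  text \<open>Since \<open>ln (1 / 0) = 0 \<le> t\<close>, the event excludes \<open>X = 0\<close>.\<close>
  have "{\<omega>\<in>space M. t < ln (1 / X \<omega>)} \<subseteq> {\<omega>\<in>space M. X \<omega> \<le> exp (- t)}"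
  proof safe
    fix \<omega> assume \<omega>: "\<omega> \<in> space M" and lt: "t < ln (1 / X \<omega>)"
    have "X \<omega> \<noteq> 0" using lt \<open>0 \<le> t\<close> by auto
    then have "X \<omega> > 0" using assms(2) \<omega> by force
    then have "exp t < 1 / X \<omega>" using lt by (metis exp_less_cancel_iff exp_ln zero_less_divide_1_iff)
    then show "X \<omega> \<le> exp (- t)" using \<open>X \<omega> > 0\<close> by (simp add: exp_minus field_simps)
  qed
  then have "emeasure M {\<omega>\<in>space M. t < ln (1 / X \<omega>)} \<le> prob {\<omega>\<in>space M. X \<omega> \<le> exp (- t)}"
    by (subst emeasure_eq_measure[symmetric], intro emeasure_mono) measurable
  also have "\<dots> \<le> ennreal (\<alpha> * exp (- t) powr k)"
    using small_ball by (intro ennreal_leI) auto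
  finally show ?thesis by (simp add: powr_def)
qed

lemma nn_integral_exp_decay_atLeast:
  fixes \<alpha> k b :: real
  assumes "0 \<le> \<alpha>" and "0 < k"
  shows "(\<integral>\<^sup>+t. ennreal (\<alpha> * exp (- k * t)) * indicator {b..} t \<partial>lborel) = ennreal (\<alpha> * exp (- k * b) / k)"
proof -
  have "(\<integral>\<^sup>+t. ennreal (\<alpha> * exp (- k * t)) * indicator {b..} t \<partial>lborel)
      = ennreal (0 - (- (\<alpha> / k) * exp (- k * b)))"
  proof (rule nn_integral_FTC_atLeast)
    show "((\<lambda>t. - (\<alpha> / k) * exp (- k * t)) has_real_derivative \<alpha> * exp (- k * t)) (at t)" for t
      using assms by (auto intro!: derivative_eq_intros simp: field_simps)
    show "((\<lambda>t. - (\<alpha> / k) * exp (- k * t)) \<longlongrightarrow> 0) at_top"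
      using assms by real_asymp
  qed (use assms in auto)
  then show ?thesis by simp
qed

lemma set_nn_integral_min_exp_decay_le:
  fixes g :: "real \<Rightarrow> ennreal" and \<alpha> k a b :: real
  assumes "0 \<le> \<alpha>" and "0 < k" and "a \<le> b"
    and "\<And>t. a < t \<Longrightarrow> g t \<le> 1"
    and "\<And>t. b \<le> t \<Longrightarrow> g t \<le> ennreal (\<alpha> * exp (- k * t))"
  shows "(\<integral>\<^sup>+t\<in>{a<..}. g t \<partial>lborel) \<le> ennreal (b - a + \<alpha> * exp (- k * b) / k)"
proof -
  have "(\<integral>\<^sup>+t\<in>{a<..}. g t \<partial>lborel)
      \<le> (\<integral>\<^sup>+t. indicator {a<..<b} t + ennreal (\<alpha> * exp (- k * t)) * indicator {b..} t \<partial>lborel)"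
    using assms(3-5) by (intro nn_integral_mono) (auto simp: indicator_def)
  also have "\<dots> = ennreal (b - a) + ennreal (\<alpha> * exp (- k * b) / k)"
    using assms nn_integral_exp_decay_atLeast[OF assms(1,2), of b] by (subst nn_integral_add) auto
  also have "\<dots> = ennreal (b - a + \<alpha> * exp (- k * b) / k)"
    using assms by (simp add: ennreal_plus)
  finally show ?thesis .
qed

theorem mainTheorem9:
  fixes M :: "'a measure" and X :: "'a \<Rightarrow> real" and \<alpha> k :: real
  assumes "prob_space M"
    and "X \<in> borel_measurable M"
    and "\<forall>\<omega>\<in>space M. X \<omega> \<ge> 0"
    and "\<alpha> > 0" and "k > 0" and "ln \<alpha> / k \<ge> 1"
    and "\<forall>\<epsilon>>0. measure M {\<omega>\<in>space M. X \<omega> \<le> \<epsilon>} \<le> \<alpha> * \<epsilon> powr k"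
  shows "(\<integral>\<^sup>+ \<omega>. ennreal (max 1 (ln (1 / X \<omega>))) \<partial>M) \<le> ennreal ((1 + ln \<alpha>) / k)"
proof -
  interpret prob_space M by (rule assms(1))
  define t\<^sub>0 where "t\<^sub>0 = ln \<alpha> / k"
  have "1 \<le> t\<^sub>0" using assms(6) by (simp add: t\<^sub>0_def)
  have crossing: "\<alpha> * exp (- k * t\<^sub>0) = 1"
    using assms(4,5) by (simp add: t\<^sub>0_def exp_minus)
  have "(\<integral>\<^sup>+ \<omega>. ennreal (max 1 (ln (1 / X \<omega>))) \<partial>M)
      = 1 + (\<integral>\<^sup>+t\<in>{1<..}. emeasure M {\<omega>\<in>space M. t < ln (1 / X \<omega>)} \<partial>lborel)"
    using assms(2) by (subst nn_integral_max_eq_tail_integral)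
      (auto simp: sigma_finite_measure_axioms emeasure_space_1)
  also have "\<dots> \<le> 1 + ennreal (t\<^sub>0 - 1 + \<alpha> * exp (- k * t\<^sub>0) / k)"
    using assms(2-7) \<open>1 \<le> t\<^sub>0\<close> by (intro add_left_mono set_nn_integral_min_exp_decay_le emeasure_ln_inverse_gt_le)
      (auto simp: emeasure_le_1)
  also have "\<dots> = ennreal (1 + (t\<^sub>0 - 1 + 1 / k))"
    unfolding crossing using \<open>1 \<le> t\<^sub>0\<close> assms(5) by (subst ennreal_plus) auto
  also have "\<dots> = ennreal ((1 + ln \<alpha>) / k)"
    by (simp add: t\<^sub>0_def add_divide_distrib add.commute)
  finally show ?thesis .
qed

end
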